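(* Let $f\colon\mathbb Q\to\mathbb R$ be arbitrary and $\sigma\in\mathbb C$. Then for every $n\ge1$, $$F_{n,\sigma}(f)=\sum_{d=1}^n\frac{1}{d^{2\sigma}}\,(\mu*D_{f_\sigma})(d)=\sum_{d\le n}\frac{D_{f_\sigma}(d)}{d^{2\sigma}}\Big(\sum_{\lambda\le n/d}\frac{\mu(\lambda)}{\lambda^{2\sigma}}\Big).$$
   Context: $\mathcal F_n=\{j/m: 1\le j\le m\le n,\ \gcd(j,m)=1\}$. $f_\sigma(x)=f(x)/x^\sigma$ for rational $x>0$ ($x^\sigma=e^{\sigma\log x}$). $F_{n,\sigma}(f)=\sum_{\kappa/\lambda\in\mathcal F_n}(\kappa\lambda)^{-\sigma}f(\kappa/\lambda)$. $D_g(d)=\sum_{k=1}^d g(k/d)$. $\mu$ is the Möbius function and $(\mu*a)(d)=\sum_{e\mid d}\mu(d/e)a(e)$ is the Dirichlet convolution. *)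

theory Defs
  imports "HOL-Analysis.Analysis" "HOL-Computational_Algebra.Squarefree"
begin

text \<open>Moebius function: mu(n) = (-1)^(number of prime factors) if n is squarefree, 0 otherwise
  (mu 0 = 0 by convention; only n >= 1 is used).\<close>
definition moebius :: "nat \<Rightarrow> complex" where
  "moebius n = (if n = 0 then 0 else if squarefree n then (-1) ^ card (prime_factors n) else 0)"

definition dir_conv :: "(nat \<Rightarrow> complex) \<Rightarrow> (nat \<Rightarrow> complex) \<Rightarrow> nat \<Rightarrow> complex" where
  "dir_conv a b d = (\<Sum>e\<in>{e. e dvd d}. a (d div e) * b e)"

definition rpow :: "rat \<Rightarrow> complex \<Rightarrow> complex" where
  "rpow x s = exp (s * of_real (ln (real_of_rat x)))"

definition f_sigma :: "(rat \<Rightarrow> real) \<Rightarrow> complex \<Rightarrow> rat \<Rightarrow> complex" where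
  "f_sigma f s x = of_real (f x) / rpow x s"

text \<open>Farey fractions of order n, as pairs (j, m) in lowest terms.\<close>
definition farey_pairs :: "nat \<Rightarrow> (nat \<times> nat) set" where
  "farey_pairs n = {(j, m). 1 \<le> j \<and> j \<le> m \<and> m \<le> n \<and> coprime j m}"

definition F_sum :: "nat \<Rightarrow> complex \<Rightarrow> (rat \<Rightarrow> real) \<Rightarrow> complex" where
  "F_sum n s f = (\<Sum>(k, l)\<in>farey_pairs n.
      rpow (of_nat (k * l)) (- s) * of_real (f (of_nat k / of_nat l)))"

definition D_sum :: "(rat \<Rightarrow> complex) \<Rightarrow> nat \<Rightarrow> complex" where
  "D_sum g d = (\<Sum>k=1..d. g (of_nat k / of_nat d))"

end

theory Submission
  imports Defs "HOL-Number_Theory.Totient"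
begin

text \<open>Grouping the Farey fractions by denominator gives \<open>F(n,\<sigma>) = \<Sum>{d \<le> n} P(d) / d^(2\<sigma>)\<close>,
  where \<open>P(d)\<close> is the sum of \<open>f\<^sub>\<sigma>\<close> over the reduced fractions \<open>k/d\<close>, because
  \<open>(k d)^(-\<sigma>) = (k/d)^(-\<sigma>) d^(-2\<sigma>)\<close>. Reducing every \<open>k/d\<close> with \<open>1 \<le> k \<le> d\<close> shows
  \<open>D(d) = \<Sum>{c | d} P(c)\<close>, so \<open>P = \<mu> * D\<close> by Moebius inversion. The second form comes from
  expanding the convolution, since \<open>d \<mapsto> d^(2\<sigma>)\<close> is completely multiplicative.\<close>

lemma moebius_prime_mult:
  assumes p: "prime (p::nat)" and "\<not> p dvd e" and "e > 0"
  shows "moebius (p * e) = - moebius e"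
proof -
  have "coprime p e" using assms by (simp add: prime_imp_coprime)
  then have "squarefree (p * e) \<longleftrightarrow> squarefree e"
    using squarefree_mult_coprime squarefree_prime[OF p] squarefree_mono by (metis dvd_triv_right)
  moreover have "prime_factors (p * e) = insert p (prime_factors e)"
    using prime_factors_product[of p e] assms prime_prime_factors[OF p] by (simp add: prime_gt_0_nat)
  moreover have "p \<notin> prime_factors e" using assms by auto
  ultimately show ?thesis using assms by (auto simp: moebius_def prime_gt_0_nat)
qed

lemma moebius_prime_mult_eq_0:
  assumes "prime (p::nat)" and "p dvd e"
  shows "moebius (p * e) = 0"
proof -
  have "p * p dvd p * e" using assms by simp
  then have "\<not> squarefree (p * e)"
    using assms not_squarefreeI[of p "p * e"] by (metis not_prime_unit power2_eq_square)
  then show ?thesis by (simp add: moebius_def)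
qed

text \<open>Split the divisors of \<open>m = p q\<close> by divisibility by \<open>p\<close>: the multiples of \<open>p\<close> are
  \<open>p e\<close> with \<open>e | q\<close>, and \<open>\<mu>(p e)\<close> cancels \<open>\<mu>(e)\<close> for \<open>p \<not>| e\<close> and vanishes otherwise.\<close>
lemma sum_moebius_divisors:
  assumes "(m::nat) > 0"
  shows "(\<Sum>e | e dvd m. moebius e) = (if m = 1 then 1 else 0)"
proof (cases "m = 1")
  case False
  then obtain p where p: "prime p" "p dvd m" using prime_factor_nat by blast
  then obtain q where q: "m = p * q" by blast
  have "q > 0" using assms q by auto
  let ?P = "{e::nat. p dvd e}"
  have multiples: "{e. e dvd m} \<inter> ?P = (\<lambda>e. p * e) ` {e. e dvd q}"
    using q p(1) prime_gt_0_nat by (auto simp: image_iff)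
  have non_multiples: "{e. e dvd m} - ?P = {e. e dvd q} - ?P"
  proof (auto simp: q)
    fix e assume "e dvd p * q" "\<not> p dvd e"
    then have "coprime e p" using p(1) by (metis coprime_commute prime_imp_coprime)
    then show "e dvd q" using \<open>e dvd p * q\<close> coprime_dvd_mult_right_iff by blast
  qed
  have "inj_on (\<lambda>e. p * e) {e. e dvd q}" using p(1) prime_gt_0_nat by (auto simp: inj_on_def)
  then have multiples_sum: "(\<Sum>e\<in>{e. e dvd m} \<inter> ?P. moebius e) = (\<Sum>e | e dvd q. moebius (p * e))"
    unfolding multiples by (simp add: sum.reindex)
  have "(\<Sum>e | e dvd m. moebius e)
          = (\<Sum>e\<in>{e. e dvd m} \<inter> ?P. moebius e) + (\<Sum>e\<in>{e. e dvd q} - ?P. moebius e)"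
    using sum.Int_Diff[of "{e. e dvd m}" moebius ?P] assms unfolding non_multiples by simp
  also have "(\<Sum>e\<in>{e. e dvd m} \<inter> ?P. moebius e)
               = (\<Sum>e\<in>{e. e dvd q} \<inter> ?P. moebius (p * e)) + (\<Sum>e\<in>{e. e dvd q} - ?P. moebius (p * e))"
    using sum.Int_Diff[of "{e. e dvd q}" "\<lambda>e. moebius (p * e)" ?P] \<open>q > 0\<close>
    by (simp add: multiples_sum)
  also have "(\<Sum>e\<in>{e. e dvd q} \<inter> ?P. moebius (p * e)) = 0"
    using moebius_prime_mult_eq_0[OF p(1)] by simp
  also have "(\<Sum>e\<in>{e. e dvd q} - ?P. moebius (p * e)) = (\<Sum>e\<in>{e. e dvd q} - ?P. - moebius e)"
    using moebius_prime_mult[OF p(1)] \<open>q > 0\<close> by (intro sum.cong) (auto intro: dvd_pos_nat)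
  finally show ?thesis using False by (simp add: sum_negf)
qed (simp add: moebius_def)

lemma sum_divisors_reflect:
  assumes "(d::nat) > 0"
  shows "(\<Sum>e | e dvd d. h (d div e)) = (\<Sum>e | e dvd d. h e)"
  by (rule sum.reindex_bij_witness[where i = "\<lambda>e. d div e" and j = "\<lambda>e. d div e"])
     (use assms in \<open>auto simp: div_div_eq_right dvd_div_eq_mult\<close>)

lemma moebius_inversion:
  assumes "(d::nat) > 0" and a: "\<And>m. m dvd d \<Longrightarrow> a m = (\<Sum>c | c dvd m. b c)"
  shows "dir_conv moebius a d = b d"
proof -
  let ?D = "{e. e dvd d}"
  have fin: "finite ?D" using assms by simp
  have divisors_quotient: "{c. c dvd d div e} = {c. c \<in> ?D \<and> c * e dvd d}" if "e \<in> ?D" for e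
    using that assms by (auto simp: dvd_div_iff_mult intro: dvd_mult_left)
  have "dir_conv moebius a d = (\<Sum>e\<in>?D. moebius e * a (d div e))"
    unfolding dir_conv_def
    using sum_divisors_reflect[OF assms(1), of "\<lambda>e. moebius e * a (d div e)"] assms(1)
    by (simp add: div_div_eq_right)
  also have "\<dots> = (\<Sum>e\<in>?D. \<Sum>c\<in>{c. c \<in> ?D \<and> c * e dvd d}. moebius e * b c)"
  proof (intro sum.cong refl)
    fix e assume "e \<in> ?D"
    moreover have "d div e dvd d"
      using \<open>e \<in> ?D\<close> by (auto elim!: dvdE)
    ultimately have "a (d div e) = (\<Sum>c\<in>{c. c \<in> ?D \<and> c * e dvd d}. b c)"
      using a divisors_quotient by simp
    then show "moebius e * a (d div e) = (\<Sum>c\<in>{c. c \<in> ?D \<and> c * e dvd d}. moebius e * b c)"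
      by (simp add: sum_distrib_left)
  qed
  also have "\<dots> = (\<Sum>c\<in>?D. \<Sum>e\<in>{e. e \<in> ?D \<and> c * e dvd d}. moebius e * b c)"
    by (rule sum.swap_restrict[OF fin fin])
  also have "\<dots> = (\<Sum>c\<in>?D. b c * (\<Sum>e | e dvd d div c. moebius e))"
    using divisors_quotient
    by (intro sum.cong refl) (simp add: mult.commute sum_distrib_left)
  also have "\<dots> = (\<Sum>c\<in>?D. if c = d then b c else 0)"
  proof (intro sum.cong refl)
    fix c assume "c \<in> ?D"
    then have "d div c > 0" "d div c = 1 \<longleftrightarrow> c = d" using assms(1) by (auto elim!: dvdE)
    then show "b c * (\<Sum>e | e dvd d div c. moebius e) = (if c = d then b c else 0)"
      by (simp add: sum_moebius_divisors)
  qed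
  also have "\<dots> = b d" using fin by simp
  finally show ?thesis .
qed

definition reduced_frac_sum :: "(rat \<Rightarrow> complex) \<Rightarrow> nat \<Rightarrow> complex" where
  "reduced_frac_sum g c = (\<Sum>k\<in>totatives c. g (of_nat k / of_nat c))"

text \<open>Group \<open>k \<in> {1..d}\<close> by \<open>e = gcd k d\<close>; the \<open>k\<close> in class \<open>e\<close> are \<open>k' e\<close> with \<open>k'\<close> a totative
  of \<open>d/e\<close>, and \<open>k' e / d = k' / (d/e)\<close>.\<close>
lemma D_sum_eq_sum_reduced_frac_sum:
  assumes "(d::nat) > 0"
  shows "D_sum g d = (\<Sum>c | c dvd d. reduced_frac_sum g c)"
proof -
  have "D_sum g d = (\<Sum>k\<in>{0<..d}. g (of_nat k / of_nat d))"
    unfolding D_sum_def by (intro sum.cong) auto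
  also have "\<dots> = (\<Sum>e | e dvd d. \<Sum>k\<in>{k\<in>{0<..d}. gcd k d = e}. g (of_nat k / of_nat d))"
    by (rule sum.group[symmetric]) (use assms in auto)
  also have "\<dots> = (\<Sum>e | e dvd d. reduced_frac_sum g (d div e))"
  proof (intro sum.cong refl)
    fix e assume e: "e \<in> {e. e dvd d}"
    then have "of_nat (k * e) / of_nat d = (of_nat k / of_nat (d div e) :: rat)" for k
      using assms by (auto elim!: dvdE)
    then show "(\<Sum>k\<in>{k\<in>{0<..d}. gcd k d = e}. g (of_nat k / of_nat d)) = reduced_frac_sum g (d div e)"
      unfolding reduced_frac_sum_def
      using sum.reindex_bij_betw[OF bij_betw_totatives_gcd_eq, of e d "\<lambda>k. g (of_nat k / of_nat d)"]
        e assms by simp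
  qed
  also have "\<dots> = (\<Sum>c | c dvd d. reduced_frac_sum g c)"
    by (rule sum_divisors_reflect[OF assms])
  finally show ?thesis .
qed

lemma rpow_nonzero: "rpow x s \<noteq> 0"
  by (simp add: rpow_def)

lemma rpow_mult:
  assumes "x > 0" "y > 0"
  shows "rpow (x * y) s = rpow x s * rpow y s"
  using assms by (simp add: rpow_def of_rat_mult ln_mult distrib_left exp_add)

lemma rpow_divide:
  assumes "x > 0" "y > 0"
  shows "rpow (x / y) s = rpow x s / rpow y s"
  using assms by (simp add: rpow_def of_rat_divide ln_div right_diff_distrib exp_diff)

lemma rpow_minus: "rpow x (- s) = 1 / rpow x s"
  by (simp add: rpow_def exp_minus field_simps)

lemma rpow_double: "rpow x (2 * s) = rpow x s * rpow x s"
  by (simp add: rpow_def exp_add[symmetric] mult.assoc)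

lemma F_sum_eq_sum_reduced_frac_sum:
  "F_sum n \<sigma> f = (\<Sum>d=1..n. reduced_frac_sum (f_sigma f \<sigma>) d / rpow (of_nat d) (2 * \<sigma>))"
proof -
  let ?S = "SIGMA l:{1..n}. totatives l"
  have farey: "farey_pairs n = prod.swap ` ?S"
    unfolding farey_pairs_def by (auto simp: in_totatives_iff)
  have "F_sum n \<sigma> f
      = (\<Sum>(l, k)\<in>?S. rpow (of_nat (k * l)) (- \<sigma>) * of_real (f (of_nat k / of_nat l)))"
    unfolding F_sum_def farey by (subst sum.reindex) (auto simp: case_prod_beta)
  also have "\<dots> = (\<Sum>l=1..n. \<Sum>k\<in>totatives l.
                     rpow (of_nat (k * l)) (- \<sigma>) * of_real (f (of_nat k / of_nat l)))"
    by (rule sum.Sigma[symmetric]) auto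
  also have "\<dots> = (\<Sum>l=1..n. reduced_frac_sum (f_sigma f \<sigma>) l / rpow (of_nat l) (2 * \<sigma>))"
    unfolding reduced_frac_sum_def sum_divide_distrib
  proof (intro sum.cong refl)
    fix l k assume "l \<in> {1..n}" "k \<in> totatives l"
    then have pos: "(of_nat k :: rat) > 0" "(of_nat l :: rat) > 0" by (auto simp: in_totatives_iff)
    have "rpow (of_nat (k * l)) (- \<sigma>) = 1 / (rpow (of_nat k) \<sigma> * rpow (of_nat l) \<sigma>)"
      using pos by (simp add: rpow_minus rpow_mult)
    moreover have "rpow (of_nat k / of_nat l) \<sigma> = rpow (of_nat k) \<sigma> / rpow (of_nat l) \<sigma>"
      using pos by (simp add: rpow_divide)
    ultimately show "rpow (of_nat (k * l)) (- \<sigma>) * of_real (f (of_nat k / of_nat l))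
          = f_sigma f \<sigma> (of_nat k / of_nat l) / rpow (of_nat l) (2 * \<sigma>)"
      unfolding f_sigma_def rpow_double using rpow_nonzero[of "of_nat k" \<sigma>] rpow_nonzero[of "of_nat l" \<sigma>]
      by (simp add: field_simps)
  qed
  finally show ?thesis .
qed

lemma Sigma_atLeastAtMost_div_eq:
  fixes n :: nat
  shows "(SIGMA e:{1..n}. {1..n div e}) = {(e, l). 0 < e \<and> 0 < l \<and> e * l \<le> n}"
proof -
  have "(e, l) \<in> (SIGMA e:{1..n}. {1..n div e}) \<longleftrightarrow> (e, l) \<in> {(e, l). 0 < e \<and> 0 < l \<and> e * l \<le> n}"
    for e l
  proof
    assume "(e, l) \<in> (SIGMA e:{1..n}. {1..n div e})"
    then have "0 < e" "0 < l" "l \<le> n div e" by auto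
    then show "(e, l) \<in> {(e, l). 0 < e \<and> 0 < l \<and> e * l \<le> n}"
      using less_eq_div_iff_mult_less_eq[of e l n] by (simp add: mult.commute)
  next
    assume "(e, l) \<in> {(e, l). 0 < e \<and> 0 < l \<and> e * l \<le> n}"
    then have el: "0 < e" "0 < l" "e * l \<le> n" by auto
    then have "e \<le> n" using order.trans[of e "e * l" n] by simp
    with el show "(e, l) \<in> (SIGMA e:{1..n}. {1..n div e})"
      by (simp add: less_eq_div_iff_mult_less_eq mult.commute)
  qed
  then show ?thesis by (simp only: set_eq_iff split_paired_All simp_thms)
qed

lemma bij_betw_divisor_pairs:
  fixes n :: nat
  shows "bij_betw (\<lambda>(e, l). (e * l, e))
           {(e, l). 0 < e \<and> 0 < l \<and> e * l \<le> n} (SIGMA d:{1..n}. {e. e dvd d})"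
  by (rule bij_betw_byWitness[where f' = "\<lambda>(d, e). (e, d div e)"]) (auto simp: Suc_le_eq)

lemma sum_dir_conv_divide_multiplicative:
  fixes r :: "nat \<Rightarrow> complex"
  assumes r: "\<And>e l. e > 0 \<Longrightarrow> l > 0 \<Longrightarrow> r (e * l) = r e * r l"
  shows "(\<Sum>d=1..n. dir_conv b a d / r d)
           = (\<Sum>d=1..n. a d / r d * (\<Sum>l=1..n div d. b l / r l))"
proof -
  let ?S = "SIGMA d:{1..n}. {e. e dvd d}"
  let ?T = "{(e, l). 0 < e \<and> 0 < l \<and> e * l \<le> n}"
  have "(\<Sum>d=1..n. dir_conv b a d / r d) = (\<Sum>(d, e)\<in>?S. b (d div e) * a e / r d)"
    unfolding dir_conv_def sum_divide_distrib by (rule sum.Sigma) auto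
  also have "\<dots> = (\<Sum>(e, l)\<in>?T. b l * a e / r (e * l))"
    by (subst sum.reindex_bij_betw[OF bij_betw_divisor_pairs, symmetric]) (auto intro!: sum.cong)
  also have "\<dots> = (\<Sum>e=1..n. \<Sum>l=1..n div e. b l * a e / r (e * l))"
    unfolding Sigma_atLeastAtMost_div_eq[symmetric] by (rule sum.Sigma[symmetric]) auto
  also have "\<dots> = (\<Sum>e=1..n. a e / r e * (\<Sum>l=1..n div e. b l / r l))"
    unfolding sum_distrib_left by (intro sum.cong refl) (simp add: r)
  finally show ?thesis .
qed

theorem lemma3p3:
  fixes f :: "rat \<Rightarrow> real" and \<sigma> :: complex and n :: nat
  assumes "n \<ge> 1"
  shows "F_sum n \<sigma> f
           = (\<Sum>d=1..n. dir_conv moebius (D_sum (f_sigma f \<sigma>)) d / rpow (of_nat d) (2 * \<sigma>))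
       \<and> F_sum n \<sigma> f
           = (\<Sum>d=1..n. D_sum (f_sigma f \<sigma>) d / rpow (of_nat d) (2 * \<sigma>)
                 * (\<Sum>l=1..n div d. moebius l / rpow (of_nat l) (2 * \<sigma>)))"
proof -
  have "dir_conv moebius (D_sum (f_sigma f \<sigma>)) d = reduced_frac_sum (f_sigma f \<sigma>) d"
    if "d \<in> {1..n}" for d
    using that by (intro moebius_inversion) (auto intro!: D_sum_eq_sum_reduced_frac_sum)
  then have first: "F_sum n \<sigma> f
      = (\<Sum>d=1..n. dir_conv moebius (D_sum (f_sigma f \<sigma>)) d / rpow (of_nat d) (2 * \<sigma>))"
    unfolding F_sum_eq_sum_reduced_frac_sum by simp
  have "rpow (of_nat (e * l)) (2 * \<sigma>) = rpow (of_nat e) (2 * \<sigma>) * rpow (of_nat l) (2 * \<sigma>)"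
    if "e > 0" "l > 0" for e l
    using that by (simp add: rpow_mult)
  then show ?thesis
    using first sum_dir_conv_divide_multiplicative[of "\<lambda>d. rpow (of_nat d) (2 * \<sigma>)"] by simp
qed

end
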